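(* Let $k\ge1$ and let $w_1,w_2\in\mathcal V_k$ be such that $(w_1,w_2)$ is a weak CLT pair. Then $\mathrm{wt}((w_1,w_2))\le k$ if $k$ is odd, and $\mathrm{wt}((w_1,w_2))\le k-1$ if $k$ is even.
   Context: A word is a finite sequence $w=(s_1,\dots,s_m)$ of positive integers; $\ell(w)=m$; closed if $s_1=s_m$; $\mathrm{supp}(w)$ its letter set. $E_w=\{\{s_i,s_{i+1}\}:1\le i\le m-1\}$ (undirected edges); a self edge is $\{u,u\}$. $N_e^w=\#\{i\le m-1:\{s_i,s_{i+1}\}=e\}$. For $a=(w_1,w_2)$: $\mathrm{wt}(a)=\#(\mathrm{supp}(w_1)\cup\mathrm{supp}(w_2))$, $E_a=E_{w_1}\cup E_{w_2}$, $N_e^a=N_e^{w_1}+N_e^{w_2}$. A weak CLT pair is a pair with $N_e^a\ge2$ for all $e\in E_a$ and $E_{w_1}\cap E_{w_2}\ne\emptyset$. $\mathcal V_k$ is the set of closed words of length $k+1$ whose first letter is $1$ and which have at least one self edge. *)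

theory Defs
  imports Main
begin

text \<open>A word is a finite list of positive integers. Positions are 0-based here:
  the word (s_1,...,s_m) is the list [s_1,...,s_m], with s_{i+1} = w ! i.\<close>

definition is_word :: "nat list \<Rightarrow> bool" where
  "is_word w \<longleftrightarrow> (\<forall>s\<in>set w. 0 < s)"

definition closed_word :: "nat list \<Rightarrow> bool" where
  "closed_word w \<longleftrightarrow> w \<noteq> [] \<and> hd w = last w"

definition supp :: "nat list \<Rightarrow> nat set" where
  "supp w = set w"

text \<open>Undirected edges as two-or-one element sets {u,v}.\<close>
definition edges :: "nat list \<Rightarrow> nat set set" where
  "edges w = {{w ! i, w ! (i + 1)} | i. i + 1 < length w}"

definition self_edge :: "nat set \<Rightarrow> bool" where
  "self_edge e \<longleftrightarrow> (\<exists>u. e = {u, u})"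

definition edge_count :: "nat list \<Rightarrow> nat set \<Rightarrow> nat" where
  "edge_count w e = card {i. i + 1 < length w \<and> {w ! i, w ! (i + 1)} = e}"

definition wt_pair :: "nat list \<Rightarrow> nat list \<Rightarrow> nat" where
  "wt_pair w1 w2 = card (supp w1 \<union> supp w2)"

definition edges_pair :: "nat list \<Rightarrow> nat list \<Rightarrow> nat set set" where
  "edges_pair w1 w2 = edges w1 \<union> edges w2"

definition edge_count_pair :: "nat list \<Rightarrow> nat list \<Rightarrow> nat set \<Rightarrow> nat" where
  "edge_count_pair w1 w2 e = edge_count w1 e + edge_count w2 e"

definition weak_CLT_pair :: "nat list \<Rightarrow> nat list \<Rightarrow> bool" where
  "weak_CLT_pair w1 w2 \<longleftrightarrow>
     (\<forall>e\<in>edges_pair w1 w2. 2 \<le> edge_count_pair w1 w2 e) \<and>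
     edges w1 \<inter> edges w2 \<noteq> {}"

definition V :: "nat \<Rightarrow> nat list set" where
  "V k = {w. is_word w \<and> closed_word w \<and> length w = k + 1 \<and> hd w = 1 \<and>
              (\<exists>e\<in>edges w. self_edge e)}"

end

theory Submission
  imports Defs
begin

(* Let E be the union of the edge sets of w1 and w2 and S the union of their
   supports.  Each of the two words takes k steps, so the edge multiplicities add up to 2k;
   since every edge of E is traversed at least twice, |E| <= k.  Both words contain a loop,
   so at most |E| - 1 <= k - 1 edges of E are proper (non-loop) edges.
   The walk s = w1 @ tl w2 visits every vertex of S starting at 1, and sending each vertex
   v /= 1 to the edge along which s first enters v is an injection into the proper edges
   of E (a spanning tree).  Hence |S| <= k, which is the bound for odd k.
   If |S| = k, all inequalities are tight: the proper edges of E are exactly the tree edges,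
   hence can be 2-coloured, E has a single loop l, shared by w1 and w2, and l is traversed
   exactly once by w1.  The closed walk w1 then changes colour in exactly k - 1 of its k
   steps; a closed walk changes colour an even number of times, so k is odd. *)

section \<open>Edges and edge multiplicities\<close>

definition proper_edges :: "nat set set \<Rightarrow> nat set set" where
  "proper_edges F = {e \<in> F. \<not> self_edge e}"

lemma proper_edges_mono: "F \<subseteq> G \<Longrightarrow> proper_edges F \<subseteq> proper_edges G"
  unfolding proper_edges_def by auto

lemma edges_eq_image: "edges w = (\<lambda>i. {w ! i, w ! (i + 1)}) ` {..<length w - 1}"
  unfolding edges_def by auto

lemma finite_edges: "finite (edges w)"
  unfolding edges_eq_image by simp

lemma edge_count_eq_0:
  assumes "e \<notin> edges w"
  shows "edge_count w e = 0"
proof -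
  have "{i. i + 1 < length w \<and> {w ! i, w ! (i + 1)} = e} = {}"
    using assms unfolding edges_def by auto
  then show ?thesis
    unfolding edge_count_def by (metis card.empty)
qed

lemma edge_count_pos:
  assumes "e \<in> edges w"
  shows "0 < edge_count w e"
proof -
  have "finite {i. i + 1 < length w \<and> {w ! i, w ! (i + 1)} = e}"
    by (rule finite_subset[of _ "{..<length w}"]) auto
  moreover from assms have "{i. i + 1 < length w \<and> {w ! i, w ! (i + 1)} = e} \<noteq> {}"
    unfolding edges_def by auto
  ultimately show ?thesis
    unfolding edge_count_def by (simp only: card_gt_0_iff not_False_eq_True simp_thms)
qed

text \<open>Every step of a word traverses exactly one edge, so the multiplicities add up to
  the number of steps.\<close>
lemma sum_edge_count: "(\<Sum>e\<in>edges w. edge_count w e) = length w - 1"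
proof -
  let ?step = "\<lambda>i. {w ! i, w ! (i + 1)}"
  have "(\<Sum>e\<in>edges w. edge_count w e)
      = (\<Sum>e\<in>?step ` {..<length w - 1}. card {i \<in> {..<length w - 1}. ?step i = e})"
    unfolding edges_eq_image edge_count_def
    by (intro sum.cong refl arg_cong[where f = card]) auto
  also have "\<dots> = (\<Sum>i<length w - 1. 1)"
    using sum.group[of "{..<length w - 1}" "?step ` {..<length w - 1}" ?step "\<lambda>_. 1::nat"]
    by simp
  finally show ?thesis by simp
qed

lemma sum_edge_count_pair:
  "(\<Sum>e\<in>edges_pair w1 w2. edge_count_pair w1 w2 e) = (length w1 - 1) + (length w2 - 1)"
proof -
  have "(\<Sum>e\<in>edges_pair w1 w2. edge_count w e) = (\<Sum>e\<in>edges w. edge_count w e)"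
    if "w = w1 \<or> w = w2" for w
    using that unfolding edges_pair_def
    by (intro sum.mono_neutral_right) (auto simp: finite_edges edge_count_eq_0)
  then show ?thesis
    unfolding edge_count_pair_def sum.distrib by (simp add: sum_edge_count)
qed

lemma sum_lower_bound_tight:
  fixes f :: "'a \<Rightarrow> nat"
  assumes "finite A" "\<forall>a\<in>A. c \<le> f a" "sum f A = c * card A" "a \<in> A"
  shows "f a = c"
proof -
  have "sum (\<lambda>a. f a - c) A = sum f A - sum (\<lambda>_. c) A"
    using assms(2) by (intro sum_subtractf_nat) auto
  then have zero: "sum (\<lambda>a. f a - c) A = 0"
    using assms(3) by simp
  have "\<forall>x\<in>A. f x - c = 0"
    by (rule iffD1[OF sum_eq_0_iff[OF assms(1)] zero])
  then have "f a - c = 0"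
    using assms(4) by blast
  then show ?thesis
    using assms(2,4) by auto
qed

text \<open>The counting argument: in a weak CLT pair every edge is used at least twice.\<close>
lemma weak_CLT_card_edges:
  assumes "weak_CLT_pair w1 w2"
  shows "2 * card (edges_pair w1 w2) \<le> (length w1 - 1) + (length w2 - 1)"
  using assms sum_bounded_below[of "edges_pair w1 w2" 2 "edge_count_pair w1 w2"]
  unfolding weak_CLT_pair_def sum_edge_count_pair by (simp add: mult.commute)

lemma weak_CLT_tight:
  assumes "weak_CLT_pair w1 w2"
    and "2 * card (edges_pair w1 w2) = (length w1 - 1) + (length w2 - 1)"
    and "e \<in> edges_pair w1 w2"
  shows "edge_count_pair w1 w2 e = 2"
  using assms sum_lower_bound_tight[of "edges_pair w1 w2" 2 "edge_count_pair w1 w2" e]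
  unfolding weak_CLT_pair_def sum_edge_count_pair
  by (simp add: edges_pair_def finite_edges)

lemma card_proper_edges:
  assumes "finite F" "l \<in> F" "self_edge l"
  shows "card (proper_edges F) + 1 \<le> card F"
    and "card (proper_edges F) + 1 = card F \<Longrightarrow> {e \<in> F. self_edge e} = {l}"
proof -
  have "proper_edges F \<union> {e \<in> F. self_edge e} = F"
    and "proper_edges F \<inter> {e \<in> F. self_edge e} = {}"
    unfolding proper_edges_def by auto
  then have split: "card (proper_edges F) + card {e \<in> F. self_edge e} = card F"
    using assms(1) card_Un_disjoint[of "proper_edges F" "{e \<in> F. self_edge e}"]
    by (simp add: proper_edges_def)
  have "card {e \<in> F. self_edge e} \<ge> 1"
    using assms by (simp add: Suc_le_eq card_gt_0_iff) blast
  then show "card (proper_edges F) + 1 \<le> card F"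
    using split by linarith
  assume "card (proper_edges F) + 1 = card F"
  then have "card {e \<in> F. self_edge e} = 1"
    using split by linarith
  then show "{e \<in> F. self_edge e} = {l}"
    using assms by (auto simp: card_1_singleton_iff)
qed

text \<open>The extremal case: if the multiplicity bound and the loop bound are both attained,
  the loop \<open>l\<close> of \<open>w1\<close> is the only loop of the pair, and \<open>w1\<close> traverses it exactly once
  (it is traversed twice in total, and \<open>w2\<close> traverses it too).\<close>
lemma weak_CLT_extremal_loop:
  assumes clt: "weak_CLT_pair w1 w2"
    and steps: "2 * card (edges_pair w1 w2) = (length w1 - 1) + (length w2 - 1)"
    and loops: "card (proper_edges (edges_pair w1 w2)) + 1 = card (edges_pair w1 w2)"
    and l: "l \<in> edges w1" "self_edge l"
    and l2: "l2 \<in> edges w2" "self_edge l2"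
  shows "e \<in> edges w1 \<Longrightarrow> self_edge e \<Longrightarrow> e = l"
    and "edge_count w1 l = 1"
proof -
  have lE: "l \<in> edges_pair w1 w2"
    using l(1) unfolding edges_pair_def by simp
  have single: "{e \<in> edges_pair w1 w2. self_edge e} = {l}"
    using card_proper_edges(2)[OF _ lE l(2) loops] by (simp add: edges_pair_def finite_edges)
  then show "e \<in> edges w1 \<Longrightarrow> self_edge e \<Longrightarrow> e = l"
    unfolding edges_pair_def by blast
  have "l2 = l"
    using single l2 unfolding edges_pair_def by blast
  then have "l \<in> edges w2"
    using l2(1) by simp
  moreover have "edge_count w1 l + edge_count w2 l = 2"
    using weak_CLT_tight[OF clt steps lE] unfolding edge_count_pair_def .
  ultimately show "edge_count w1 l = 1"
    using edge_count_pos[OF l(1)] edge_count_pos[of l w2] by linarith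
qed

lemma edges_glue:
  assumes "xs \<noteq> []" "ys \<noteq> []" "last xs = hd ys"
  shows "edges (xs @ tl ys) \<subseteq> edges xs \<union> edges ys"
proof
  fix e assume "e \<in> edges (xs @ tl ys)"
  then obtain i where i: "i + 1 < length (xs @ tl ys)"
    and e: "e = {(xs @ tl ys) ! i, (xs @ tl ys) ! (i + 1)}"
    unfolding edges_def by auto
  show "e \<in> edges xs \<union> edges ys"
  proof (cases "i + 1 < length xs")
    case True
    then have "e = {xs ! i, xs ! (i + 1)}"
      using e by (simp add: nth_append)
    then show ?thesis
      using True unfolding edges_def by auto
  next
    case False
    define j where "j = i + 1 - length xs"
    have "(xs @ tl ys) ! i = ys ! j"
    proof (cases "i + 1 = length xs")
      case True
      then have "i = length xs - 1"
        by simp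
      then have "(xs @ tl ys) ! i = last xs"
        using assms(1) by (simp add: nth_append last_conv_nth)
      then show ?thesis
        using True assms unfolding j_def by (simp add: hd_conv_nth)
    next
      case False
      then show ?thesis
        using \<open>\<not> i + 1 < length xs\<close> i unfolding j_def by (simp add: nth_append nth_tl Suc_diff_le)
    qed
    moreover have "(xs @ tl ys) ! (i + 1) = ys ! (j + 1)"
      using False i unfolding j_def by (simp add: nth_append nth_tl Suc_diff_le)
    moreover have "j + 1 < length ys"
      using False i unfolding j_def by auto
    ultimately show ?thesis
      using e unfolding edges_def by auto
  qed
qed

lemma set_glue:
  assumes "xs \<noteq> []" "ys \<noteq> []" "last xs = hd ys"
  shows "set (xs @ tl ys) = set xs \<union> set ys"
  using assms by (cases ys) auto

section \<open>Spanning walks\<close>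

definition first_index :: "'a list \<Rightarrow> 'a \<Rightarrow> nat" where
  "first_index s v = (LEAST j. s ! j = v)"

definition entry_edge :: "nat list \<Rightarrow> nat \<Rightarrow> nat set" where
  "entry_edge s v = {s ! (first_index s v - 1), v}"

lemma first_index:
  assumes "v \<in> set s"
  shows "first_index s v < length s" "s ! first_index s v = v"
    and "\<And>j. j < first_index s v \<Longrightarrow> s ! j \<noteq> v"
proof -
  obtain j where j: "j < length s" "s ! j = v"
    using assms by (auto simp: in_set_conv_nth)
  show "s ! first_index s v = v"
    unfolding first_index_def using j(2) by (rule LeastI)
  show "first_index s v < length s"
    using Least_le[of "\<lambda>j. s ! j = v", OF j(2)] j(1) unfolding first_index_def by simp
  show "\<And>j. j < first_index s v \<Longrightarrow> s ! j \<noteq> v"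
    unfolding first_index_def using not_less_Least by blast
qed

lemma first_index_pos:
  assumes "v \<in> set s - {hd s}"
  shows "0 < first_index s v"
  using assms first_index(2)[of v s] by (cases s) (auto intro: Nat.gr0I)

text \<open>The first entry into a new vertex comes from a different vertex, so the entry edge
  is a proper edge of the walk.\<close>
lemma entry_edge_proper:
  assumes "v \<in> set s - {hd s}"
  shows "entry_edge s v \<in> proper_edges (edges s)"
proof -
  let ?j = "first_index s v - 1"
  have j: "?j + 1 = first_index s v"
    using first_index_pos[OF assms] by simp
  then have "entry_edge s v = {s ! ?j, s ! (?j + 1)}" "?j + 1 < length s"
    using first_index[of v s] assms unfolding entry_edge_def by auto
  moreover have "s ! ?j \<noteq> v"
    using first_index(3)[of v s] assms j by simp
  ultimately show ?thesis
    unfolding proper_edges_def edges_def self_edge_def entry_edge_def by auto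
qed

text \<open>Distinct vertices are entered along distinct edges: if \<open>v\<close> is entered from \<open>v'\<close>
  and \<open>v'\<close> from \<open>v\<close>, each would have to be visited before the other.\<close>
lemma inj_on_entry_edge: "inj_on (entry_edge s) (set s - {hd s})"
proof (rule inj_onI, rule ccontr)
  fix v v' assume v: "v \<in> set s - {hd s}" and v': "v' \<in> set s - {hd s}"
    and eq: "entry_edge s v = entry_edge s v'" and ne: "v \<noteq> v'"
  then have "s ! (first_index s v - 1) = v'" "s ! (first_index s v' - 1) = v"
    unfolding entry_edge_def by (auto simp: doubleton_eq_iff)
  then have "\<not> first_index s v' - 1 < first_index s v" "\<not> first_index s v - 1 < first_index s v'"
    using first_index(3)[of v s] first_index(3)[of v' s] v v' by auto
  then show False
    using first_index_pos[OF v] first_index_pos[OF v'] by linarith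
qed

text \<open>A 2-colouring that separates the endpoints of every step entering a new vertex;
  it is built by colouring each new vertex opposite to its predecessor.\<close>
lemma first_visit_coloring:
  "\<exists>c :: 'a \<Rightarrow> bool. \<forall>i. i + 1 < length xs \<and> xs ! (i + 1) \<notin> set (take (i + 1) xs)
      \<longrightarrow> c (xs ! i) \<noteq> c (xs ! (i + 1))"
proof (induction xs rule: rev_induct)
  case Nil
  then show ?case by simp
next
  case (snoc x xs)
  from snoc.IH obtain c :: "'a \<Rightarrow> bool" where c:
    "\<And>i. i + 1 < length xs \<Longrightarrow> xs ! (i + 1) \<notin> set (take (i + 1) xs)
       \<Longrightarrow> c (xs ! i) \<noteq> c (xs ! (i + 1))"
    by blast
  define c' where "c' = (if x \<in> set xs then c else c(x := \<not> c (last xs)))"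
  have "c' ((xs @ [x]) ! i) \<noteq> c' ((xs @ [x]) ! (i + 1))"
    if i: "i + 1 < length (xs @ [x])" and new: "(xs @ [x]) ! (i + 1) \<notin> set (take (i + 1) (xs @ [x]))"
    for i
  proof (cases "i + 1 < length xs")
    case True
    then have "xs ! i \<in> set xs" "xs ! (i + 1) \<in> set xs"
      by auto
    then show ?thesis
      using c[of i] True new unfolding c'_def by (auto simp: nth_append)
  next
    case False
    then have last: "i + 1 = length xs" "xs \<noteq> []"
      using i by auto
    then have new_x: "x \<notin> set xs"
      using new by simp
    have "i = length xs - 1"
      using last(1) by simp
    then have "(xs @ [x]) ! i = last xs"
      using last(2) by (simp add: nth_append last_conv_nth)
    moreover have "(xs @ [x]) ! (i + 1) = x"
      using last(1) by simp
    moreover have "last xs \<noteq> x"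
      using new_x last(2) by auto
    ultimately show ?thesis
      using new_x unfolding c'_def by simp
  qed
  then show ?case by blast
qed

lemma entry_edge_coloring:
  "\<exists>c :: nat \<Rightarrow> bool. \<forall>v \<in> set s - {hd s}. \<forall>a b. entry_edge s v = {a, b} \<longrightarrow> c a \<noteq> c b"
proof -
  obtain c :: "nat \<Rightarrow> bool" where c:
    "\<And>i. i + 1 < length s \<Longrightarrow> s ! (i + 1) \<notin> set (take (i + 1) s) \<Longrightarrow> c (s ! i) \<noteq> c (s ! (i + 1))"
    using first_visit_coloring[of s] by blast
  have col: "c (s ! (first_index s v - 1)) \<noteq> c v" if v: "v \<in> set s - {hd s}" for v
  proof -
    let ?j = "first_index s v - 1"
    have j: "?j + 1 = first_index s v"
      using first_index_pos[OF v] by simp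
    have "s ! (?j + 1) \<notin> set (take (?j + 1) s)"
      using first_index[of v s] v j by (auto simp: in_set_conv_nth)
    then show ?thesis
      using c[of ?j] first_index[of v s] v j by simp
  qed
  show ?thesis
  proof (intro exI[of _ c] ballI allI impI)
    fix v a b assume "v \<in> set s - {hd s}" "entry_edge s v = {a, b}"
    then show "c a \<noteq> c b"
      using col[of v] unfolding entry_edge_def by (auto simp: doubleton_eq_iff)
  qed
qed

lemma spanning_walk:
  assumes "s \<noteq> []" "edges s \<subseteq> F" "finite F"
  shows "card (set s) \<le> card (proper_edges F) + 1"
    and "card (set s) = card (proper_edges F) + 1 \<Longrightarrow>
           \<exists>c :: nat \<Rightarrow> bool. \<forall>a b. {a, b} \<in> proper_edges F \<longrightarrow> c a \<noteq> c b"
proof -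
  let ?T = "entry_edge s ` (set s - {hd s})"
  have sub: "?T \<subseteq> proper_edges F"
    using entry_edge_proper assms(2) unfolding proper_edges_def by blast
  have fin: "finite (proper_edges F)"
    using assms(3) unfolding proper_edges_def by simp
  have cardT: "card ?T + 1 = card (set s)"
    using card_image[OF inj_on_entry_edge[of s]] assms(1)
    by (simp add: Suc_le_eq card_gt_0_iff)
  then show "card (set s) \<le> card (proper_edges F) + 1"
    using card_mono[OF fin sub] by simp
  assume "card (set s) = card (proper_edges F) + 1"
  then have tree: "?T = proper_edges F"
    using card_subset_eq[OF fin sub] cardT by simp
  from entry_edge_coloring[of s] obtain c :: "nat \<Rightarrow> bool"
    where c: "\<forall>v \<in> set s - {hd s}. \<forall>a b. entry_edge s v = {a, b} \<longrightarrow> c a \<noteq> c b" ..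
  show "\<exists>c :: nat \<Rightarrow> bool. \<forall>a b. {a, b} \<in> proper_edges F \<longrightarrow> c a \<noteq> c b"
  proof (intro exI[of _ c] allI impI)
    fix a b assume "{a, b} \<in> proper_edges F"
    then have "{a, b} \<in> ?T"
      by (simp only: tree)
    then obtain v where "v \<in> set s - {hd s}" "entry_edge s v = {a, b}"
      by (rule imageE) simp
    then show "c a \<noteq> c b"
      using c by blast
  qed
qed

section \<open>Colour changes along closed walks\<close>

lemma walk_parity:
  fixes c :: "'a \<Rightarrow> bool"
  assumes "xs \<noteq> []"
  shows "even (card {i. i + 1 < length xs \<and> c (xs ! i) \<noteq> c (xs ! (i + 1))})
           \<longleftrightarrow> c (hd xs) = c (last xs)"
  using assms
proof (induction xs rule: rev_induct)
  case Nil
  then show ?case by simp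
next
  case (snoc x xs)
  show ?case
  proof (cases "xs = []")
    case True
    then show ?thesis by simp
  next
    case False
    let ?A = "{i. i + 1 < length xs \<and> c (xs ! i) \<noteq> c (xs ! (i + 1))}"
    let ?B = "if c (last xs) \<noteq> c x then {length xs - 1} else {}"
    have fin: "finite ?A"
      by (rule finite_subset[of _ "{..<length xs}"]) auto
    have "i + 1 < length (xs @ [x]) \<and> c ((xs @ [x]) ! i) \<noteq> c ((xs @ [x]) ! (i + 1))
        \<longleftrightarrow> i \<in> ?A \<union> ?B" for i
    proof -
      consider "i + 1 < length xs" | "i + 1 = length xs" | "i + 1 > length xs"
        by linarith
      then show ?thesis
      proof cases
        case 2
        then have "i = length xs - 1"
          by simp
        then show ?thesis
          using False by (auto simp: nth_append last_conv_nth)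
      qed (use False in \<open>auto simp: nth_append\<close>)
    qed
    then have "{i. i + 1 < length (xs @ [x]) \<and> c ((xs @ [x]) ! i) \<noteq> c ((xs @ [x]) ! (i + 1))}
        = ?A \<union> ?B"
      by blast
    moreover have "length xs - 1 \<notin> ?A"
      by auto
    then have "card (?A \<union> ?B) = card ?A + (if c (last xs) \<noteq> c x then 1 else 0)"
      using fin by auto
    ultimately show ?thesis
      using snoc.IH[OF False] False by auto
  qed
qed

text \<open>If a closed walk uses a single loop, exactly once, and a 2-colouring separates the
  endpoints of all its other edges, then the walk has an odd number of steps: all steps
  but one change colour, and a closed walk changes colour an even number of times.\<close>
lemma closed_walk_single_loop_odd:
  fixes c :: "nat \<Rightarrow> bool"
  assumes closed: "w \<noteq> []" "hd w = last w"
    and loop: "self_edge l"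
    and loops: "\<And>e. e \<in> edges w \<Longrightarrow> self_edge e \<Longrightarrow> e = l"
    and once: "edge_count w l = 1"
    and coloring: "\<And>a b. {a, b} \<in> proper_edges (edges w) \<Longrightarrow> c a \<noteq> c b"
  shows "odd (length w - 1)"
proof -
  let ?I = "{..<length w - 1}"
  let ?L = "{i. i + 1 < length w \<and> {w ! i, w ! (i + 1)} = l}"
  let ?C = "{i. i + 1 < length w \<and> c (w ! i) \<noteq> c (w ! (i + 1))}"
  have "i \<in> ?C \<longleftrightarrow> i \<in> ?I - ?L" for i
  proof (cases "i + 1 < length w")
    case step: True
    then have e: "{w ! i, w ! (i + 1)} \<in> edges w"
      unfolding edges_def by auto
    show ?thesis
    proof (cases "w ! i = w ! (i + 1)")
      case True
      then have "{w ! i, w ! (i + 1)} = l"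
        using loops[OF e] unfolding self_edge_def by auto
      then show ?thesis
        using True step by auto
    next
      case False
      then have "{w ! i, w ! (i + 1)} \<noteq> l"
        using loop unfolding self_edge_def by (auto simp: doubleton_eq_iff)
      moreover have "c (w ! i) \<noteq> c (w ! (i + 1))"
        using coloring[of "w ! i" "w ! (i + 1)"] e False
        unfolding proper_edges_def self_edge_def by (auto simp: doubleton_eq_iff)
      ultimately show ?thesis
        using step by auto
    qed
  next
    case False
    then show ?thesis by auto
  qed
  then have "?C = ?I - ?L"
    by blast
  moreover have "card ?L = 1" "?L \<subseteq> ?I"
    using once unfolding edge_count_def by auto
  ultimately have "card ?C = length w - 1 - 1"
    by (simp add: card_Diff_subset finite_subset)
  moreover have "even (card ?C)"
    using walk_parity[of w c] closed by simp
  moreover have "length w - 1 \<ge> 1"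
    using \<open>card ?L = 1\<close> \<open>?L \<subseteq> ?I\<close> card_mono[of ?I ?L] by simp
  ultimately show ?thesis
    by presburger
qed

lemma V_facts:
  assumes "w \<in> V k"
  shows "w \<noteq> []" "length w = k + 1" "hd w = 1" "last w = 1" "\<exists>l\<in>edges w. self_edge l"
  using assms unfolding V_def closed_word_def by auto

theorem mainTheorem14:
  fixes k :: nat and w1 w2 :: "nat list"
  assumes "k \<ge> 1"
    and "w1 \<in> V k" and "w2 \<in> V k"
    and "weak_CLT_pair w1 w2"
  shows "(odd k \<longrightarrow> wt_pair w1 w2 \<le> k) \<and> (even k \<longrightarrow> wt_pair w1 w2 \<le> k - 1)"
proof -
  note w1 = V_facts[OF assms(2)] and w2 = V_facts[OF assms(3)]
  define E where "E = edges_pair w1 w2"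
  define s where "s = w1 @ tl w2"
  obtain l l2 where l: "l \<in> edges w1" "self_edge l" and l2: "l2 \<in> edges w2" "self_edge l2"
    using w1(5) w2(5) by blast
  have finE: "finite E" and lE: "l \<in> E"
    using l unfolding E_def edges_pair_def by (auto simp: finite_edges)
  have walk: "s \<noteq> []" "edges s \<subseteq> E"
    using w1 w2 edges_glue[of w1 w2] unfolding s_def E_def edges_pair_def by auto
  have wt: "wt_pair w1 w2 = card (set s)"
    using w1 w2 set_glue[of w1 w2] unfolding s_def wt_pair_def supp_def by simp
  have edges_bound: "2 * card E \<le> 2 * k"
    using weak_CLT_card_edges[OF assms(4)] w1 w2 unfolding E_def by simp
  note vertex_bound = spanning_walk(1)[OF walk finE]
    and loop_bound = card_proper_edges(1)[OF finE lE l(2)]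
  have tight_odd: "odd k" if "card (set s) = k"
  proof -
    have tight: "card (set s) = card (proper_edges E) + 1" "card (proper_edges E) + 1 = card E"
      and steps: "2 * card E = (length w1 - 1) + (length w2 - 1)"
      using that vertex_bound loop_bound edges_bound w1(2) w2(2) by auto
    obtain c :: "nat \<Rightarrow> bool" where c: "\<And>a b. {a, b} \<in> proper_edges E \<Longrightarrow> c a \<noteq> c b"
      using spanning_walk(2)[OF walk finE tight(1)] by blast
    have "proper_edges (edges w1) \<subseteq> proper_edges E"
      unfolding E_def edges_pair_def by (simp add: proper_edges_mono)
    then have coloring_w1: "c a \<noteq> c b" if "{a, b} \<in> proper_edges (edges w1)" for a b
      using c that by blast
    note extremal =
      weak_CLT_extremal_loop[OF assms(4) steps[unfolded E_def] tight(2)[unfolded E_def] l l2]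
    have "odd (length w1 - 1)"
      using closed_walk_single_loop_odd[OF w1(1) _ l(2) extremal coloring_w1] w1(3,4) by simp
    then show "odd k"
      using w1(2) by simp
  qed
  have "card (set s) \<le> k - 1" if "even k"
    using vertex_bound loop_bound edges_bound tight_odd that by fastforce
  then show ?thesis
    unfolding wt using vertex_bound loop_bound edges_bound by fastforce
qed

end
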